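(* Let $r\in\mathbb{N}$, let $\mathbf{e}=(e_1,\ldots,e_r)\in\mathbb{Z}^r$, and suppose the Jordan totient quotient $J_{\mathbf e}$ has weight $w=\sum_{i=1}^r ie_i=0$. Then $\mathfrak{S}_{\mathbf e}>0$ and, for $x\ge 2$, \[ \sum_{n\le x}J_{\mathbf e}(n)=\mathfrak{S}_{\mathbf e}\,x+O_{\mathbf e}\big((\log x)^{|e_1|}\big). \]
   Context: Throughout, $p$ denotes a prime. For an integer $k\ge1$, the $k$-th Jordan totient is $J_k(n)=n^k\prod_{p\mid n}(1-p^{-k})$. For $\mathbf e=(e_1,\ldots,e_r)\in\mathbb{Z}^r$ the Jordan totient quotient is $J_{\mathbf e}(n)=\prod_{i=1}^r J_i(n)^{e_i}=n^w\prod_{p\mid n}\prod_{i=1}^r(1-p^{-i})^{e_i}$, where $w=\sum_i ie_i$ is its weight. Define $\mathfrak{S}_{\mathbf e}=\prod_p\left(1+\frac{J_{\mathbf e}(p)p^{-w}-1}{p}\right)$. *)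

theory Defs
  imports "HOL-Analysis.Analysis" "HOL-Computational_Algebra.Primes"
begin

definition jordan_totient :: "nat \<Rightarrow> nat \<Rightarrow> real" where
  "jordan_totient k n = real n ^ k * (\<Prod>p\<in>prime_factors n. 1 - 1 / real p ^ k)"

definition jordan_quot :: "(nat \<Rightarrow> int) \<Rightarrow> nat \<Rightarrow> nat \<Rightarrow> real" where
  "jordan_quot e r n = (\<Prod>i\<in>{1..r}. jordan_totient i n powi e i)"

definition jq_weight :: "(nat \<Rightarrow> int) \<Rightarrow> nat \<Rightarrow> int" where
  "jq_weight e r = (\<Sum>i\<in>{1..r}. int i * e i)"

definition jq_factor :: "(nat \<Rightarrow> int) \<Rightarrow> nat \<Rightarrow> nat \<Rightarrow> real" where
  "jq_factor e r p = (if prime p then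
      1 + (jordan_quot e r p * real p powi (- jq_weight e r) - 1) / real p else 1)"

definition jq_sing :: "(nat \<Rightarrow> int) \<Rightarrow> nat \<Rightarrow> real" where
  "jq_sing e r = (\<Prod>p. jq_factor e r p)"

end

theory Submission
  imports Defs
begin

text \<open>
  For weight zero the powers of n cancel and J_e(n) = prod_{p | n} f(1/p) with
  f(u) = prod_i (1 - u^i)^(e_i) = 1 - e_1 u + O(u^2).  Hence J_e = 1 * g for the multiplicative
  function g supported on squarefree numbers with g(p) = f(1/p) - 1 = O(|e_1|/p + 1/p^2), and
  sum_{n <= x} J_e(n) = sum_{d <= x} g(d) floor(x/d)
                      = S x - x sum_{d > x} g(d)/d + O(sum_{d <= x} |g(d)|),
  where S = sum_d g(d)/d is the Euler product defining the singular series.  By Rankin's trick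
  both error sums are at most x^s prod_p (1 + |g(p)| p^(-s)) <= x^s e^c (1 + 1/s)^|e_1|, and
  s = 1/(1 + ln x) turns this into O((ln x)^|e_1|).  The Euler product converges absolutely and its
  factors are positive, so S > 0.
\<close>

lemma prod_power_int_distrib:
  "(\<Prod>x\<in>A. f x) powi k = (\<Prod>x\<in>A. f x powi k :: 'a :: field)"
  by (induction A rule: infinite_finite_induct) (auto simp: power_int_mult_distrib)

lemma prod_power_int_eq_power_int_sum:
  "x \<noteq> 0 \<Longrightarrow> (\<Prod>i\<in>A. x powi k i) = (x :: 'a :: field) powi (\<Sum>i\<in>A. k i)"
  by (induction A rule: infinite_finite_induct) (auto simp: power_int_add)

text \<open>The variable u stands for 1/p, so the range [0, 1/2] covers all primes.\<close>

definition lin_approx :: "real \<Rightarrow> (real \<Rightarrow> real) \<Rightarrow> bool" where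
  "lin_approx \<alpha> \<phi> \<longleftrightarrow> (\<exists>C. \<forall>u. 0 \<le> u \<and> u \<le> 1/2 \<longrightarrow> \<bar>\<phi> u - (1 + \<alpha> * u)\<bar> \<le> C * u\<^sup>2)"

lemma lin_approxI:
  assumes "\<And>u. 0 \<le> u \<Longrightarrow> u \<le> 1/2 \<Longrightarrow> \<bar>\<phi> u - (1 + \<alpha> * u)\<bar> \<le> C * u\<^sup>2"
  shows "lin_approx \<alpha> \<phi>"
  using assms unfolding lin_approx_def by blast

lemma lin_approxE:
  assumes "lin_approx \<alpha> \<phi>"
  obtains C where "C \<ge> 0" "\<And>u. 0 \<le> u \<Longrightarrow> u \<le> 1/2 \<Longrightarrow> \<bar>\<phi> u - (1 + \<alpha> * u)\<bar> \<le> C * u\<^sup>2"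
proof -
  obtain C where C: "\<And>u. 0 \<le> u \<Longrightarrow> u \<le> 1/2 \<Longrightarrow> \<bar>\<phi> u - (1 + \<alpha> * u)\<bar> \<le> C * u\<^sup>2"
    using assms unfolding lin_approx_def by blast
  have "\<bar>\<phi> u - (1 + \<alpha> * u)\<bar> \<le> \<bar>C\<bar> * u\<^sup>2" if "0 \<le> u" "u \<le> 1/2" for u
    by (rule order_trans[OF C[OF that] mult_right_mono]) auto
  then show thesis using that[of "\<bar>C\<bar>"] by simp
qed

lemma lin_approx_bounded:
  assumes "lin_approx \<alpha> \<phi>"
  obtains B where "\<And>u. 0 \<le> u \<Longrightarrow> u \<le> 1/2 \<Longrightarrow> \<bar>\<phi> u\<bar> \<le> B"
proof -
  obtain C where C: "C \<ge> 0" "\<And>u. 0 \<le> u \<Longrightarrow> u \<le> 1/2 \<Longrightarrow> \<bar>\<phi> u - (1 + \<alpha> * u)\<bar> \<le> C * u\<^sup>2"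
    using lin_approxE[OF assms] by blast
  have "\<bar>\<phi> u\<bar> \<le> 1 + \<bar>\<alpha>\<bar> + C" if u: "0 \<le> u" "u \<le> 1/2" for u
  proof -
    have "\<bar>\<alpha> * u\<bar> \<le> \<bar>\<alpha>\<bar>" using u by (simp add: abs_mult mult_left_le)
    moreover have "C * u\<^sup>2 \<le> C" using u C(1) by (simp add: mult_left_le power_le_one)
    ultimately show ?thesis using C(2)[OF u] by linarith
  qed
  then show thesis by (rule that)
qed

lemma lin_approx_mult:
  assumes "lin_approx \<alpha> \<phi>" "lin_approx \<beta> \<psi>"
  shows "lin_approx (\<alpha> + \<beta>) (\<lambda>u. \<phi> u * \<psi> u)"
proof -
  obtain C where C: "C \<ge> 0" "\<And>u. 0 \<le> u \<Longrightarrow> u \<le> 1/2 \<Longrightarrow> \<bar>\<phi> u - (1 + \<alpha> * u)\<bar> \<le> C * u\<^sup>2"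
    using lin_approxE[OF assms(1)] by blast
  obtain D where D: "D \<ge> 0" "\<And>u. 0 \<le> u \<Longrightarrow> u \<le> 1/2 \<Longrightarrow> \<bar>\<psi> u - (1 + \<beta> * u)\<bar> \<le> D * u\<^sup>2"
    using lin_approxE[OF assms(2)] by blast
  obtain B where B: "\<And>u. 0 \<le> u \<Longrightarrow> u \<le> 1/2 \<Longrightarrow> \<bar>\<psi> u\<bar> \<le> B"
    using lin_approx_bounded[OF assms(2)] by blast
  show ?thesis
  proof (rule lin_approxI)
    fix u :: real assume u: "0 \<le> u" "u \<le> 1/2"
    have "\<phi> u * \<psi> u - (1 + (\<alpha> + \<beta>) * u)
        = (\<phi> u - (1 + \<alpha> * u)) * \<psi> u + (1 + \<alpha> * u) * (\<psi> u - (1 + \<beta> * u)) + \<alpha> * \<beta> * u\<^sup>2"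
      by (simp add: algebra_simps power2_eq_square)
    also have "\<bar>\<dots>\<bar> \<le> C * u\<^sup>2 * B + (1 + \<bar>\<alpha>\<bar>) * (D * u\<^sup>2) + \<bar>\<alpha> * \<beta>\<bar> * u\<^sup>2"
    proof -
      have "\<bar>(\<phi> u - (1 + \<alpha> * u)) * \<psi> u\<bar> \<le> C * u\<^sup>2 * B"
        unfolding abs_mult using C(2)[OF u] B[OF u] by (intro mult_mono) auto
      moreover have "\<bar>1 + \<alpha> * u\<bar> \<le> 1 + \<bar>\<alpha>\<bar>"
        using u by (simp add: abs_mult mult_left_le order_trans[OF abs_triangle_ineq])
      then have "\<bar>(1 + \<alpha> * u) * (\<psi> u - (1 + \<beta> * u))\<bar> \<le> (1 + \<bar>\<alpha>\<bar>) * (D * u\<^sup>2)"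
        unfolding abs_mult using D(2)[OF u] by (intro mult_mono) auto
      moreover have "\<bar>\<alpha> * \<beta> * u\<^sup>2\<bar> = \<bar>\<alpha> * \<beta>\<bar> * u\<^sup>2"
        by (simp add: abs_mult)
      ultimately show ?thesis by linarith
    qed
    finally show "\<bar>\<phi> u * \<psi> u - (1 + (\<alpha> + \<beta>) * u)\<bar> \<le> (C * B + (1 + \<bar>\<alpha>\<bar>) * D + \<bar>\<alpha> * \<beta>\<bar>) * u\<^sup>2"
      by (simp add: algebra_simps)
  qed
qed

lemma lin_approx_prod:
  assumes "finite I" "\<And>i. i \<in> I \<Longrightarrow> lin_approx (\<alpha> i) (\<phi> i)"
  shows "lin_approx (\<Sum>i\<in>I. \<alpha> i) (\<lambda>u. \<Prod>i\<in>I. \<phi> i u)"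
  using assms
proof (induction I rule: finite_induct)
  case empty
  show ?case by (rule lin_approxI[of _ _ 0]) simp
next
  case (insert i I)
  then show ?case using lin_approx_mult[of "\<alpha> i" "\<phi> i"] by simp
qed

lemma lin_approx_power:
  assumes "lin_approx \<alpha> \<phi>"
  shows "lin_approx (of_nat m * \<alpha>) (\<lambda>u. \<phi> u ^ m)"
  using lin_approx_prod[of "{..<m}" "\<lambda>_. \<alpha>" "\<lambda>_. \<phi>"] assms by simp

lemma lin_approx_one_minus: "lin_approx (-1) (\<lambda>u. 1 - u)"
  by (rule lin_approxI[of _ _ 0]) simp

lemma lin_approx_inverse_one_minus: "lin_approx 1 (\<lambda>u. inverse (1 - u))"
proof (rule lin_approxI)
  fix u :: real assume u: "0 \<le> u" "u \<le> 1/2"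
  have "inverse (1 - u) - (1 + 1 * u) = u\<^sup>2 / (1 - u)"
    using u by (simp add: field_simps power2_eq_square)
  also have "\<bar>\<dots>\<bar> \<le> 2 * u\<^sup>2"
  proof -
    have "u\<^sup>2 * 1 \<le> u\<^sup>2 * (2 * (1 - u))" using u by (intro mult_left_mono) auto
    then show ?thesis using u by (simp add: divide_le_eq algebra_simps)
  qed
  finally show "\<bar>inverse (1 - u) - (1 + 1 * u)\<bar> \<le> 2 * u\<^sup>2" .
qed

lemma lin_approx_one_minus_powi: "lin_approx (- of_int k) (\<lambda>u. (1 - u) powi k)"
proof (cases "k \<ge> 0")
  case True
  then show ?thesis
    using lin_approx_power[OF lin_approx_one_minus, of "nat k"] by (simp add: power_int_def)
next
  case False
  then show ?thesis
    using lin_approx_power[OF lin_approx_inverse_one_minus, of "nat (- k)"] by (simp add: power_int_def)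
qed

lemma lin_approx_compose_power:
  assumes "lin_approx \<alpha> \<phi>" "i \<ge> 2"
  shows "lin_approx 0 (\<lambda>u. \<phi> (u ^ i))"
proof -
  obtain C where C: "C \<ge> 0" "\<And>u. 0 \<le> u \<Longrightarrow> u \<le> 1/2 \<Longrightarrow> \<bar>\<phi> u - (1 + \<alpha> * u)\<bar> \<le> C * u\<^sup>2"
    using lin_approxE[OF assms(1)] by blast
  show ?thesis
  proof (rule lin_approxI)
    fix u :: real assume u: "0 \<le> u" "u \<le> 1/2"
    have ui: "u ^ i \<le> u\<^sup>2" using u assms(2) by (intro power_decreasing) auto
    have "u\<^sup>2 \<le> u" using u by (simp add: power2_eq_square mult_left_le_one_le)
    then have ui1: "u ^ i \<le> 1/2" using ui u by linarith
    have "\<bar>\<alpha> * u ^ i\<bar> = \<bar>\<alpha>\<bar> * u ^ i" using u by (simp add: abs_mult)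
    then have "\<bar>\<phi> (u ^ i) - 1\<bar> \<le> \<bar>\<phi> (u ^ i) - (1 + \<alpha> * u ^ i)\<bar> + \<bar>\<alpha>\<bar> * u ^ i"
      by linarith
    also have "\<dots> \<le> C * (u ^ i)\<^sup>2 + \<bar>\<alpha>\<bar> * u ^ i"
      using C(2)[of "u ^ i"] u ui1 by simp
    also have "\<dots> \<le> C * u\<^sup>2 + \<bar>\<alpha>\<bar> * u\<^sup>2"
    proof -
      have "(u ^ i)\<^sup>2 \<le> u ^ i" using u ui1 by (simp add: power2_eq_square mult_left_le_one_le)
      then show ?thesis using C(1) ui by (intro add_mono mult_left_mono) auto
    qed
    finally show "\<bar>\<phi> (u ^ i) - (1 + 0 * u)\<bar> \<le> (C + \<bar>\<alpha>\<bar>) * u\<^sup>2"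
      by (simp add: algebra_simps)
  qed
qed

lemma lin_approx_abs_diff_one_le:
  assumes "lin_approx \<alpha> \<phi>" "\<bar>\<alpha>\<bar> \<le> a"
  obtains C where "C \<ge> 0" "\<And>u. 0 \<le> u \<Longrightarrow> u \<le> 1/2 \<Longrightarrow> \<bar>\<phi> u - 1\<bar> \<le> a * u + C * u\<^sup>2"
proof -
  obtain C where C: "C \<ge> 0" "\<And>u. 0 \<le> u \<Longrightarrow> u \<le> 1/2 \<Longrightarrow> \<bar>\<phi> u - (1 + \<alpha> * u)\<bar> \<le> C * u\<^sup>2"
    using lin_approxE[OF assms(1)] by blast
  have "\<bar>\<phi> u - 1\<bar> \<le> a * u + C * u\<^sup>2" if u: "0 \<le> u" "u \<le> 1/2" for u
  proof -
    have "\<bar>\<alpha> * u\<bar> \<le> a * u" using u assms(2) by (simp add: abs_mult mult_right_mono)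
    then show ?thesis using C(2)[OF u] by linarith
  qed
  then show thesis using that C(1) by blast
qed

text \<open>A finite set D of primes encodes the squarefree number \<open>\<Prod>D\<close>.\<close>

definition prime_sets :: "nat set set" where
  "prime_sets = {D. finite D \<and> (\<forall>p\<in>D. prime p)}"

lemma Prod_prime_set_pos: "D \<in> prime_sets \<Longrightarrow> \<Prod>D > 0"
  unfolding prime_sets_def by (auto intro: prod_pos prime_gt_0_nat)

lemma prime_factors_Prod_prime_set:
  assumes "D \<in> prime_sets"
  shows "prime_factors (\<Prod>D) = D"
proof -
  have "0 \<notin> D" using assms by (auto simp: prime_sets_def)
  then have "prime_factors (\<Prod>D) = (\<Union>p\<in>D. prime_factors p)"
    using assms prime_factors_prod[of D "\<lambda>p. p"] by (simp add: prime_sets_def)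
  also have "\<dots> = D"
    using assms by (auto simp: prime_sets_def prime_prime_factors)
  finally show ?thesis .
qed

lemma inj_on_Prod_prime_sets: "inj_on Prod prime_sets"
  by (metis inj_onI prime_factors_Prod_prime_set)

lemma subset_prime_factors_iff:
  assumes "n > 0"
  shows "D \<subseteq> prime_factors n \<longleftrightarrow> D \<in> prime_sets \<and> \<Prod>D dvd n"
proof
  assume D: "D \<subseteq> prime_factors n"
  then have "D \<in> prime_sets"
    by (auto simp: prime_sets_def intro: finite_subset)
  moreover have "\<Prod>D dvd n"
  proof -
    have "\<Prod>D dvd \<Prod>(prime_factors n)"
      using D by (intro prod_dvd_prod_subset) auto
    also have "\<Prod>(prime_factors n) dvd (\<Prod>p\<in>prime_factors n. p ^ multiplicity p n)"
      by (intro prod_dvd_prod dvd_power) (auto simp: prime_multiplicity_gt_zero_iff in_prime_factors_iff)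
    also have "\<dots> = n"
      using assms by (simp add: prod_prime_factors)
    finally show ?thesis .
  qed
  ultimately show "D \<in> prime_sets \<and> \<Prod>D dvd n" ..
next
  assume "D \<in> prime_sets \<and> \<Prod>D dvd n"
  then show "D \<subseteq> prime_factors n"
    using assms by (auto simp: prime_sets_def in_prime_factors_iff intro: dvd_trans[OF dvd_prodI])
qed

lemma finite_prime_sets_Prod_le: "finite {D \<in> prime_sets. \<Prod>D \<le> N}"
proof -
  have "D \<subseteq> {..N}" if D: "D \<in> prime_sets" "\<Prod>D \<le> N" for D
  proof
    fix p assume "p \<in> D"
    then have "p \<le> \<Prod>D"
      using D dvd_prodI[of D p "\<lambda>p. p"] by (intro dvd_imp_le Prod_prime_set_pos) (auto simp: prime_sets_def)
    then show "p \<in> {..N}" using D by simp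
  qed
  then have "{D \<in> prime_sets. \<Prod>D \<le> N} \<subseteq> Pow {..N}" by blast
  then show ?thesis by (rule finite_subset) simp
qed

lemma card_multiples_atLeastAtMost:
  assumes "d > 0"
  shows "card {n \<in> {1..N}. d dvd n} = N div d"
proof -
  have k_range: "d * k \<in> {1..N} \<longleftrightarrow> k \<in> {1..N div d}" for k
    using assms by (simp add: less_eq_div_iff_mult_less_eq mult.commute Suc_le_eq)
  have "{n \<in> {1..N}. d dvd n} = (\<lambda>k. d * k) ` {1..N div d}"
  proof (intro equalityI subsetI)
    fix n assume "n \<in> {n \<in> {1..N}. d dvd n}"
    then obtain k where "n = d * k" "d * k \<in> {1..N}" by (auto elim: dvdE)
    then show "n \<in> (\<lambda>k. d * k) ` {1..N div d}" using k_range by blast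
  next
    fix n assume "n \<in> (\<lambda>k. d * k) ` {1..N div d}"
    then obtain k where "n = d * k" "k \<in> {1..N div d}" by blast
    then show "n \<in> {n \<in> {1..N}. d dvd n}" using k_range[of k] by simp
  qed
  moreover have "inj_on (\<lambda>k. d * k) {1..N div d}"
    using assms by (simp add: inj_on_def)
  ultimately show ?thesis by (simp add: card_image)
qed

lemma sum_prod_one_plus_prime_factors:
  fixes g :: "nat \<Rightarrow> 'a :: comm_semiring_1"
  shows "(\<Sum>n\<in>{1..N}. \<Prod>p\<in>prime_factors n. 1 + g p)
       = (\<Sum>D\<in>{D \<in> prime_sets. \<Prod>D \<le> N}. (\<Prod>p\<in>D. g p) * of_nat (N div \<Prod>D))"
proof -
  let ?S = "{D \<in> prime_sets. \<Prod>D \<le> N}"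
  have pow: "Pow (prime_factors n) = {D \<in> ?S. \<Prod>D dvd n}" if n: "n \<in> {1..N}" for n
  proof -
    have "D \<subseteq> prime_factors n \<longleftrightarrow> D \<in> ?S \<and> \<Prod>D dvd n" for D
      using n subset_prime_factors_iff[of n D] dvd_imp_le[of "\<Prod>D" n] by auto
    then show ?thesis by (simp add: set_eq_iff)
  qed
  have "(\<Prod>p\<in>prime_factors n. 1 + g p) = (\<Sum>D\<in>Pow (prime_factors n). \<Prod>p\<in>D. g p)" for n
    using prod_add[of "prime_factors n" g "\<lambda>_. 1"] by (simp add: add.commute)
  then have "(\<Sum>n\<in>{1..N}. \<Prod>p\<in>prime_factors n. 1 + g p)
      = (\<Sum>n\<in>{1..N}. \<Sum>D\<in>{D \<in> ?S. \<Prod>D dvd n}. \<Prod>p\<in>D. g p)"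
    by (intro sum.cong refl) (simp add: pow)
  also have "\<dots> = (\<Sum>D\<in>?S. \<Sum>n\<in>{n \<in> {1..N}. \<Prod>D dvd n}. \<Prod>p\<in>D. g p)"
    using finite_prime_sets_Prod_le by (intro sum.swap_restrict) auto
  also have "\<dots> = (\<Sum>D\<in>?S. (\<Prod>p\<in>D. g p) * of_nat (N div \<Prod>D))"
  proof (intro sum.cong refl)
    fix D assume "D \<in> ?S"
    then have "card {n \<in> {1..N}. \<Prod>D dvd n} = N div \<Prod>D"
      by (intro card_multiples_atLeastAtMost Prod_prime_set_pos) simp
    then show "(\<Sum>n\<in>{n \<in> {1..N}. \<Prod>D dvd n}. \<Prod>p\<in>D. g p) = (\<Prod>p\<in>D. g p) * of_nat (N div \<Prod>D)"
      by (simp only: sum_constant mult.commute)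
  qed
  finally show ?thesis .
qed

lemma powr_minus_diff_lower_bound:
  fixes s :: real
  assumes "s > 0" "d \<ge> 2"
  shows "s * real d powr (-(1 + s)) \<le> real (d - 1) powr (-s) - real d powr (-s)"
proof -
  define y where "y = 1 / real d"
  have y: "0 < y" "y \<le> 1/2" using assms(2) by (auto simp: y_def field_simps)
  have "s * ln (1 - y) \<le> s * (- y)"
    using ln_le_minus_one[of "1 - y"] y assms(1) by (intro mult_left_mono) auto
  then have "1 + s * y \<le> exp (- s * ln (1 - y))"
    using exp_ge_add_one_self[of "- s * ln (1 - y)"] by simp
  also have "\<dots> = (1 - y) powr (-s)"
    using y by (simp add: powr_def)
  finally have bernoulli: "1 + s * y \<le> (1 - y) powr (-s)" .
  have "real (d - 1) = real d * (1 - y)"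
    using assms(2) by (simp add: y_def of_nat_diff field_simps)
  then have "real (d - 1) powr (-s) = real d powr (-s) * (1 - y) powr (-s)"
    using y by (simp add: powr_mult)
  also have "\<dots> \<ge> real d powr (-s) * (1 + s * y)"
    using bernoulli by (intro mult_left_mono) auto
  finally have "s * (real d powr (-s) * y) \<le> real (d - 1) powr (-s) - real d powr (-s)"
    by (simp add: algebra_simps)
  moreover have "real d powr (-s) * y = real d powr (-(1 + s))"
    using assms(2) by (simp add: y_def powr_diff powr_minus field_simps)
  ultimately show ?thesis by simp
qed

lemma sum_powr_le_one_plus_inverse:
  fixes s :: real
  assumes "s > 0"
  shows "(\<Sum>d\<in>{1..M}. real d powr (-(1 + s))) \<le> 1 + 1 / s"
proof -
  have telescoped: "(\<Sum>d\<in>{1..M}. real d powr (-(1 + s))) \<le> 1 + (1 - real M powr (-s)) / s"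
    if "M \<ge> 1" for M
    using that
  proof (induction M rule: dec_induct)
    case (step M)
    have "s * real (Suc M) powr (-(1 + s)) \<le> real M powr (-s) - real (Suc M) powr (-s)"
      using powr_minus_diff_lower_bound[OF assms, of "Suc M"] step by simp
    then have "real (Suc M) powr (-(1 + s)) \<le> (real M powr (-s) - real (Suc M) powr (-s)) / s"
      using assms by (simp add: pos_le_divide_eq mult.commute)
    with step.IH show ?case by (simp add: diff_divide_distrib)
  qed simp
  show ?thesis
  proof (cases "M \<ge> 1")
    case True
    have "(1 - real M powr (-s)) / s \<le> 1 / s"
      using assms by (intro divide_right_mono) auto
    with telescoped[OF True] show ?thesis by linarith
  qed (use assms in simp)
qed

lemma prod_one_plus_powr_primes_le:
  fixes \<sigma> :: real
  assumes "finite P" "\<forall>p\<in>P. prime p" "\<sigma> > 0"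
  shows "(\<Prod>p\<in>P. 1 + real p powr (-(1 + \<sigma>))) \<le> 1 + 1 / \<sigma>"
proof -
  define g where "g d = real d powr (-(1 + \<sigma>))" for d :: nat
  have subsets: "Pow P \<subseteq> prime_sets"
    using assms by (auto simp: prime_sets_def intro: finite_subset)
  have "(\<Prod>p\<in>P. 1 + g p) = (\<Sum>D\<in>Pow P. \<Prod>p\<in>D. g p)"
    using prod_add[of P g "\<lambda>_. 1"] assms(1) by (simp add: add.commute)
  also have "\<dots> = (\<Sum>D\<in>Pow P. g (\<Prod>D))"
    by (simp add: g_def prod_powr_distrib)
  also have "\<dots> = (\<Sum>d\<in>Prod ` Pow P. g d)"
    using inj_on_subset[OF inj_on_Prod_prime_sets subsets] by (simp add: sum.reindex)
  also have "\<dots> \<le> (\<Sum>d\<in>{1..\<Prod>P}. g d)"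
  proof (rule sum_mono2)
    show "Prod ` Pow P \<subseteq> {1..\<Prod>P}"
    proof safe
      fix D assume "D \<subseteq> P"
      then have "D \<in> prime_sets" "P \<in> prime_sets" "\<Prod>D dvd \<Prod>P"
        using subsets assms(1) by (auto intro: prod_dvd_prod_subset)
      then have "\<Prod>D dvd \<Prod>P" "\<Prod>D > 0" "\<Prod>P > 0"
        by (simp_all add: Prod_prime_set_pos)
      then show "\<Prod>D \<in> {1..\<Prod>P}" by (auto intro: dvd_imp_le)
    qed
  qed (auto simp: g_def)
  also have "\<dots> \<le> 1 + 1 / \<sigma>"
    unfolding g_def by (rule sum_powr_le_one_plus_inverse[OF assms(3)])
  finally show ?thesis by (simp add: g_def)
qed

lemma sum_inverse_square_primes_le_one:
  assumes "finite P" "\<forall>p\<in>P. prime p"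
  shows "(\<Sum>p\<in>P. 1 / real p ^ 2) \<le> 1"
proof -
  obtain m where "\<forall>p\<in>P. p \<le> m"
    using assms(1) finite_nat_set_iff_bounded_le by auto
  then have M: "P \<subseteq> {2..Suc m}"
    using assms(2) prime_ge_2_nat by force
  have square: "1 / real d ^ 2 = real d powr (-(1 + 1))" if "d \<ge> 1" for d :: nat
    using that by (simp add: powr_minus powr_realpow divide_inverse)
  have "(\<Sum>p\<in>P. 1 / real p ^ 2) \<le> (\<Sum>d\<in>{2..Suc m}. 1 / real d ^ 2)"
    using M by (intro sum_mono2) auto
  also have "\<dots> = (\<Sum>d\<in>{1..Suc m}. 1 / real d ^ 2) - 1"
  proof -
    have "{1..Suc m} = insert 1 {2..Suc m}" by auto
    then show ?thesis by simp
  qed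
  also have "(\<Sum>d\<in>{1..Suc m}. 1 / real d ^ 2) = (\<Sum>d\<in>{1..Suc m}. real d powr (-(1 + 1)))"
    by (intro sum.cong refl) (simp add: square)
  also have "\<dots> \<le> 1 + 1 / 1"
    by (rule sum_powr_le_one_plus_inverse) simp
  finally show ?thesis by simp
qed

lemma one_plus_mult_le_power_mult:
  fixes a :: nat and c p x :: real
  assumes "0 \<le> x" "x \<le> 1 / p" "p > 0" "c \<ge> 0"
  shows "1 + (a + c / p) * x \<le> (1 + x) ^ a * (1 + c / p\<^sup>2)"
proof -
  have "c / p * x \<le> c / p * (1 / p)"
    using assms by (intro mult_left_mono) auto
  then have "c / p * x \<le> c / p\<^sup>2"
    by (simp add: power2_eq_square)
  moreover have bernoulli: "1 + a * x \<le> (1 + x) ^ a"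
    using Bernoulli_inequality[of x a] assms(1) by simp
  moreover have "0 \<le> a * x * (c / p\<^sup>2)"
    using assms by simp
  moreover have "(1 + a * x) * (1 + c / p\<^sup>2) = 1 + a * x + c / p\<^sup>2 + a * x * (c / p\<^sup>2)"
    "(a + c / p) * x = a * x + c / p * x"
    by (simp_all add: ring_distribs add_divide_distrib)
  ultimately have "1 + (a + c / p) * x \<le> (1 + a * x) * (1 + c / p\<^sup>2)"
    by linarith
  also have "\<dots> \<le> (1 + x) ^ a * (1 + c / p\<^sup>2)"
    using bernoulli assms by (intro mult_right_mono) auto
  finally show ?thesis .
qed

lemma prod_one_plus_inverse_square_primes_le_exp:
  assumes "finite P" "\<forall>p\<in>P. prime p" "c \<ge> 0"
  shows "(\<Prod>p\<in>P. 1 + c / real p ^ 2) \<le> exp c"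
proof -
  have "(\<Prod>p\<in>P. 1 + c / real p ^ 2) \<le> (\<Prod>p\<in>P. exp (c / real p ^ 2))"
    using assms(3) by (intro prod_mono) auto
  also have "\<dots> = exp (c * (\<Sum>p\<in>P. 1 / real p ^ 2))"
    using assms(1) by (simp add: exp_sum sum_distrib_left)
  also have "\<dots> \<le> exp c"
    using sum_inverse_square_primes_le_one[OF assms(1,2)] assms(3) by (simp add: mult_left_le)
  finally show ?thesis .
qed

lemma prod_euler_bound:
  fixes a :: nat and c \<sigma> :: real
  assumes P: "finite P" "\<forall>p\<in>P. prime p" and "c \<ge> 0" "\<sigma> > 0"
  shows "(\<Prod>p\<in>P. 1 + (a + c / p) * real p powr (-(1 + \<sigma>))) \<le> exp c * (1 + 1 / \<sigma>) ^ a"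
proof -
  define x where "x p = real p powr (-(1 + \<sigma>))" for p :: nat
  have "x p \<le> 1 / p" if "p \<in> P" for p
  proof -
    have "real p \<ge> 2" using P that prime_ge_2_nat by auto
    then have "x p \<le> real p powr (-1)"
      unfolding x_def using assms(4) by (intro powr_mono) auto
    then show ?thesis using \<open>real p \<ge> 2\<close> by (simp add: powr_minus_divide)
  qed
  then have "1 + (a + c / p) * x p \<le> (1 + x p) ^ a * (1 + c / real p ^ 2)" if "p \<in> P" for p
    using that assms(2,3) prime_gt_0_nat
    by (intro one_plus_mult_le_power_mult) (auto simp: x_def)
  then have "(\<Prod>p\<in>P. 1 + (a + c / p) * x p) \<le> (\<Prod>p\<in>P. (1 + x p) ^ a * (1 + c / real p ^ 2))"
    using assms(3) by (intro prod_mono) (auto simp: x_def)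
  also have "\<dots> = (\<Prod>p\<in>P. 1 + x p) ^ a * (\<Prod>p\<in>P. 1 + c / real p ^ 2)"
    by (simp add: prod.distrib prod_power_distrib)
  also have "\<dots> \<le> (1 + 1 / \<sigma>) ^ a * exp c"
    using prod_one_plus_powr_primes_le[OF P assms(4)] prod_one_plus_inverse_square_primes_le_exp[OF P assms(3)]
      assms(3,4)
    by (intro mult_mono power_mono) (auto simp: x_def intro!: prod_nonneg)
  finally show ?thesis by (simp add: x_def mult.commute)
qed

lemma rankin_bound:
  fixes a :: nat and c \<sigma> :: real
  assumes "finite A" "A \<subseteq> prime_sets" "c \<ge> 0" "\<sigma> > 0"
  shows "(\<Sum>D\<in>A. \<Prod>p\<in>D. (a + c / p) * real p powr (-(1 + \<sigma>))) \<le> exp c * (1 + 1 / \<sigma>) ^ a"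
proof -
  define t where "t p = (a + c / p) * real p powr (-(1 + \<sigma>))" for p :: nat
  have P: "finite (\<Union>A)" "\<forall>p\<in>\<Union>A. prime p"
    using assms(1,2) by (auto simp: prime_sets_def)
  have "(\<Sum>D\<in>A. \<Prod>p\<in>D. t p) \<le> (\<Sum>D\<in>Pow (\<Union>A). \<Prod>p\<in>D. t p)"
    using P assms(3) by (intro sum_mono2) (auto simp: t_def intro!: prod_nonneg)
  also have "\<dots> = (\<Prod>p\<in>\<Union>A. 1 + t p)"
    using prod_add[of "\<Union>A" t "\<lambda>_. 1"] P by (simp add: add.commute)
  also have "\<dots> \<le> exp c * (1 + 1 / \<sigma>) ^ a"
    unfolding t_def by (rule prod_euler_bound[OF P assms(3,4)])
  finally show ?thesis by (simp add: t_def)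
qed

lemma filterlim_Pow_primes_le:
  "filterlim (\<lambda>n. Pow {p. prime p \<and> p \<le> n}) (finite_subsets_at_top prime_sets) sequentially"
  unfolding filterlim_finite_subsets_at_top
proof (intro allI impI, elim conjE)
  fix X assume X: "finite X" "X \<subseteq> prime_sets"
  then have "finite (\<Union>X)" by (auto simp: prime_sets_def)
  then obtain M where M: "\<forall>p\<in>\<Union>X. p \<le> M" using finite_nat_set_iff_bounded_le by auto
  have "Pow {p. prime p \<and> p \<le> n} \<subseteq> prime_sets" for n
    by (auto simp: prime_sets_def intro: finite_subset[of _ "{..n}"])
  moreover have "X \<subseteq> Pow {p. prime p \<and> p \<le> n}" if "n \<ge> M" for n
    using X M that by (force simp: prime_sets_def)
  ultimately show "\<forall>\<^sub>F n in sequentially. finite (Pow {p. prime p \<and> p \<le> n})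
      \<and> X \<subseteq> Pow {p. prime p \<and> p \<le> n} \<and> Pow {p. prime p \<and> p \<le> n} \<subseteq> prime_sets"
    using eventually_mono[OF eventually_ge_at_top[of M]] by auto
qed

lemma abs_div_minus_divide_le_one:
  assumes "d > 0" "real N \<le> x" "x < real N + 1"
  shows "\<bar>real (N div d) - x / real d\<bar> \<le> 1"
proof -
  have "real N = real (N div d) * real d + real (N mod d)"
    by (metis of_nat_add of_nat_mult div_mult_mod_eq)
  moreover have "real (N mod d) + 1 \<le> real d"
    using assms(1) mod_less_divisor[of d N] by linarith
  ultimately have "x / real d - real (N div d) = (x - real N + real (N mod d)) / real d"
    "0 \<le> (x - real N + real (N mod d)) / real d" "(x - real N + real (N mod d)) / real d \<le> 1"
    using assms by (auto simp: field_simps)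
  then show ?thesis by linarith
qed

lemma two_plus_ln_le:
  fixes x :: real
  assumes "x \<ge> 2"
  shows "2 + ln x \<le> (1 + 2 / ln 2) * ln x"
proof -
  have "2 / ln 2 * ln 2 \<le> 2 / ln 2 * ln x"
    using assms by (intro mult_left_mono) auto
  then show ?thesis by (simp add: algebra_simps)
qed

text \<open>
  The multiplicative function F(n) = prod_{p | n} (1 + h p) equals 1 * g with g(\<open>\<Prod>D\<close>) = prod_{p in D} h p
  on squarefree numbers, and mean_value is sum_d g(d)/d.
\<close>

locale near_one_at_primes =
  fixes h :: "nat \<Rightarrow> real" and a :: nat and c :: real
  assumes c_nonneg: "c \<ge> 0"
    and abs_h_le: "prime p \<Longrightarrow> \<bar>h p\<bar> \<le> (a + c / p) / p"
begin

definition euler_factor :: "nat \<Rightarrow> real" where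
  "euler_factor k = (if prime k then 1 + h k / k else 1)"

definition mean_value :: real where
  "mean_value = infsum (\<lambda>D. \<Prod>p\<in>D. h p / p) prime_sets"

lemma rankin_bound_abs_h:
  assumes "finite A" "A \<subseteq> prime_sets" "\<sigma> > 0"
  shows "(\<Sum>D\<in>A. \<Prod>p\<in>D. \<bar>h p\<bar> * real p powr (-\<sigma>)) \<le> exp c * (1 + 1 / \<sigma>) ^ a"
proof -
  have "\<bar>h p\<bar> * real p powr (-\<sigma>) \<le> (a + c / p) * real p powr (-(1 + \<sigma>))" if "prime p" for p
  proof -
    have p: "real p > 0" using prime_gt_0_nat[OF that] by simp
    have "\<bar>h p\<bar> * real p powr (-\<sigma>) \<le> (a + c / p) / p * real p powr (-\<sigma>)"
      using abs_h_le[OF that] by (intro mult_right_mono) auto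
    also have "\<dots> = (a + c / p) * real p powr (-(1 + \<sigma>))"
      using p by (simp add: powr_diff powr_minus field_simps)
    finally show ?thesis .
  qed
  then have "(\<Sum>D\<in>A. \<Prod>p\<in>D. \<bar>h p\<bar> * real p powr (-\<sigma>))
      \<le> (\<Sum>D\<in>A. \<Prod>p\<in>D. (a + c / p) * real p powr (-(1 + \<sigma>)))"
    using assms(2) by (intro sum_mono prod_mono) (auto simp: prime_sets_def)
  also have "\<dots> \<le> exp c * (1 + 1 / \<sigma>) ^ a"
    by (rule rankin_bound[OF assms(1,2) c_nonneg assms(3)])
  finally show ?thesis .
qed

lemma abs_summable_mean_terms: "(\<lambda>D. norm (\<Prod>p\<in>D. h p / p)) summable_on prime_sets"
proof (rule nonneg_bdd_above_summable_on)
  show "bdd_above (sum (\<lambda>D. norm (\<Prod>p\<in>D. h p / p)) ` {F. F \<subseteq> prime_sets \<and> finite F})"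
  proof (rule bdd_aboveI2)
    fix F assume F: "F \<in> {F. F \<subseteq> prime_sets \<and> finite F}"
    have "norm (\<Prod>p\<in>D. h p / p) = (\<Prod>p\<in>D. \<bar>h p\<bar> * real p powr (-1))" for D
      by (simp add: abs_prod powr_minus_divide prime_gt_0_nat abs_divide)
    then show "(\<Sum>D\<in>F. norm (\<Prod>p\<in>D. h p / p)) \<le> exp c * (1 + 1 / 1) ^ a"
      using rankin_bound_abs_h[of F 1] F by simp
  qed
qed simp

lemma prod_euler_factor_tendsto_mean_value:
  "(\<lambda>n. \<Prod>k\<le>n. euler_factor k) \<longlonglongrightarrow> mean_value"
proof -
  have partial: "(\<Prod>k\<le>n. euler_factor k) = sum (\<lambda>D. \<Prod>p\<in>D. h p / p) (Pow {p. prime p \<and> p \<le> n})" for n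
  proof -
    have "(\<Prod>k\<le>n. euler_factor k) = (\<Prod>p\<in>{p. prime p \<and> p \<le> n}. 1 + h p / p)"
      by (rule prod.mono_neutral_cong_right) (auto simp: euler_factor_def)
    also have "\<dots> = sum (\<lambda>D. \<Prod>p\<in>D. h p / p) (Pow {p. prime p \<and> p \<le> n})"
      using prod_add[of "{p. prime p \<and> p \<le> n}" "\<lambda>p. h p / p" "\<lambda>_. 1"] by (simp add: add.commute)
    finally show ?thesis .
  qed
  have "(\<lambda>D. \<Prod>p\<in>D. h p / p) summable_on prime_sets"
    using abs_summable_summable[OF abs_summable_mean_terms] .
  then have "((\<lambda>D. \<Prod>p\<in>D. h p / p) has_sum mean_value) prime_sets"
    unfolding mean_value_def by (rule has_sum_infsum)
  then have "(sum (\<lambda>D. \<Prod>p\<in>D. h p / p) \<longlongrightarrow> mean_value) (finite_subsets_at_top prime_sets)"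
    unfolding has_sum_def .
  from filterlim_compose[OF this filterlim_Pow_primes_le] show ?thesis
    by (simp add: partial)
qed

lemma summable_abs_euler_factor_minus_one: "summable (\<lambda>k. \<bar>euler_factor k - 1\<bar>)"
proof (rule summable_comparison_test')
  show "summable (\<lambda>k. (a + c) * inverse (real k ^ 2))"
    by (intro summable_mult inverse_power_summable) simp
  fix k :: nat
  show "norm \<bar>euler_factor k - 1\<bar> \<le> (a + c) * inverse (real k ^ 2)"
  proof (cases "prime k")
    case True
    then have k: "real k \<ge> 1" using prime_ge_1_nat by simp
    have "\<bar>euler_factor k - 1\<bar> = \<bar>h k\<bar> / k"
      using True by (simp add: euler_factor_def abs_divide)
    also have "\<dots> \<le> (a + c / k) / k / k"
      using abs_h_le[OF True] k by (intro divide_right_mono) auto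
    also have "\<dots> \<le> (a + c) / k / k"
      using c_nonneg k by (intro divide_right_mono add_left_mono) (auto simp: divide_le_eq mult_le_cancel_left1)
    finally show ?thesis by (simp add: power2_eq_square divide_inverse mult.assoc)
  qed (simp add: euler_factor_def c_nonneg)
qed

lemma euler_product_eq_mean_value:
  assumes "\<And>p. prime p \<Longrightarrow> 1 + h p / p > 0"
  shows "convergent_prod euler_factor" "prodinf euler_factor = mean_value" "mean_value > 0"
proof -
  have pos: "euler_factor k > 0" for k
    using assms by (simp add: euler_factor_def)
  have "convergent_prod (\<lambda>k. 1 + (euler_factor k - 1))"
    using summable_abs_euler_factor_minus_one pos
    by (intro summable_imp_convergent_prod_real) (auto simp: less_le)
  then show conv: "convergent_prod euler_factor" by simp
  show eq: "prodinf euler_factor = mean_value"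
    using LIMSEQ_unique[OF convergent_prod_LIMSEQ[OF conv] prod_euler_factor_tendsto_mean_value] .
  have "prodinf euler_factor \<ge> 0"
    using pos by (intro LIMSEQ_le_const[OF convergent_prod_LIMSEQ[OF conv]]) (auto intro: prod_nonneg less_imp_le)
  moreover have "prodinf euler_factor \<noteq> 0"
    using pos by (intro prodinf_nonzero[OF conv]) (metis less_irrefl)
  ultimately show "mean_value > 0" using eq by simp
qed

lemma prod_abs_h_mult_powr:
  "(\<Prod>p\<in>D. \<bar>h p\<bar> * real p powr s) = \<bar>\<Prod>p\<in>D. h p\<bar> * real (\<Prod>D) powr s"
  by (simp add: prod.distrib abs_prod prod_powr_distrib)

lemma sum_abs_head_le:
  assumes "real N \<le> x" "\<sigma> > 0"
  shows "(\<Sum>D\<in>{D \<in> prime_sets. \<Prod>D \<le> N}. \<bar>\<Prod>p\<in>D. h p\<bar>) \<le> x powr \<sigma> * (exp c * (1 + 1 / \<sigma>) ^ a)"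
proof -
  let ?H = "{D \<in> prime_sets. \<Prod>D \<le> N}"
  have "\<bar>\<Prod>p\<in>D. h p\<bar> \<le> x powr \<sigma> * (\<Prod>p\<in>D. \<bar>h p\<bar> * real p powr (-\<sigma>))" if D: "D \<in> ?H" for D
  proof -
    have "\<Prod>D > 0" using D by (simp add: Prod_prime_set_pos)
    then have pos: "real (\<Prod>D) > 0" by (simp only: of_nat_0_less_iff)
    have "real (\<Prod>D) powr \<sigma> * (\<Prod>p\<in>D. \<bar>h p\<bar> * real p powr (-\<sigma>))
        = \<bar>\<Prod>p\<in>D. h p\<bar> * real (\<Prod>D) powr (\<sigma> + -\<sigma>)"
      unfolding prod_abs_h_mult_powr powr_add by (simp only: mult_ac)
    then have "\<bar>\<Prod>p\<in>D. h p\<bar> = real (\<Prod>D) powr \<sigma> * (\<Prod>p\<in>D. \<bar>h p\<bar> * real p powr (-\<sigma>))"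
      using pos by simp
    also have "\<dots> \<le> x powr \<sigma> * (\<Prod>p\<in>D. \<bar>h p\<bar> * real p powr (-\<sigma>))"
    proof (intro mult_right_mono powr_mono2)
      have "\<Prod>D \<le> N" using D by simp
      then have "real (\<Prod>D) \<le> real N" by (simp only: of_nat_le_iff)
      then show "real (\<Prod>D) \<le> x" using assms(1) by linarith
    qed (use assms(2) in \<open>auto intro: prod_nonneg\<close>)
    finally show ?thesis .
  qed
  then have "(\<Sum>D\<in>?H. \<bar>\<Prod>p\<in>D. h p\<bar>) \<le> x powr \<sigma> * (\<Sum>D\<in>?H. \<Prod>p\<in>D. \<bar>h p\<bar> * real p powr (-\<sigma>))"
    unfolding sum_distrib_left by (rule sum_mono)
  also have "\<dots> \<le> x powr \<sigma> * (exp c * (1 + 1 / \<sigma>) ^ a)"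
    using finite_prime_sets_Prod_le assms(2) by (intro mult_left_mono rankin_bound_abs_h) auto
  finally show ?thesis .
qed

lemma abs_infsum_tail_le:
  assumes "x > 0" "x < real N + 1" "0 < \<sigma>" "\<sigma> \<le> 1"
  shows "\<bar>infsum (\<lambda>D. \<Prod>p\<in>D. h p / p) {D \<in> prime_sets. N < \<Prod>D}\<bar>
    \<le> x powr (\<sigma> - 1) * (exp c * (1 + 1 / \<sigma>) ^ a)"
proof -
  let ?T = "{D \<in> prime_sets. N < \<Prod>D}"
  have summable: "(\<lambda>D. norm (\<Prod>p\<in>D. h p / p)) summable_on ?T"
    by (rule summable_on_subset[OF abs_summable_mean_terms]) auto
  have term_le: "norm (\<Prod>p\<in>D. h p / p) \<le> x powr (\<sigma> - 1) * (\<Prod>p\<in>D. \<bar>h p\<bar> * real p powr (-\<sigma>))"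
    if D: "D \<in> ?T" for D
  proof -
    have "N + 1 \<le> \<Prod>D" using D by simp
    then have "real (N + 1) \<le> real (\<Prod>D)" by (rule of_nat_mono)
    then have "real (\<Prod>D) \<ge> x" using assms(2) by simp
    have "real (\<Prod>D) powr (\<sigma> - 1) * (\<Prod>p\<in>D. \<bar>h p\<bar> * real p powr (-\<sigma>))
        = \<bar>\<Prod>p\<in>D. h p\<bar> * real (\<Prod>D) powr (\<sigma> - 1 + -\<sigma>)"
      by (simp only: prod_abs_h_mult_powr powr_add mult_ac)
    also have "\<dots> = (\<Prod>p\<in>D. \<bar>h p\<bar> * real p powr (\<sigma> - 1 + -\<sigma>))"
      by (rule prod_abs_h_mult_powr[symmetric])
    also have "\<dots> = norm (\<Prod>p\<in>D. h p / p)"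
      using D by (auto simp: prime_sets_def abs_prod abs_divide powr_minus_divide prime_gt_0_nat intro!: prod.cong)
    finally have "norm (\<Prod>p\<in>D. h p / p) = real (\<Prod>D) powr (\<sigma> - 1) * (\<Prod>p\<in>D. \<bar>h p\<bar> * real p powr (-\<sigma>))" ..
    also have "\<dots> \<le> x powr (\<sigma> - 1) * (\<Prod>p\<in>D. \<bar>h p\<bar> * real p powr (-\<sigma>))"
      using \<open>real (\<Prod>D) \<ge> x\<close> assms
      by (intro mult_right_mono powr_mono2') (auto intro: prod_nonneg)
    finally show ?thesis .
  qed
  have "\<bar>infsum (\<lambda>D. \<Prod>p\<in>D. h p / p) ?T\<bar> \<le> infsum (\<lambda>D. norm (\<Prod>p\<in>D. h p / p)) ?T"
    using norm_infsum_bound[OF summable] by simp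
  also have "\<dots> \<le> x powr (\<sigma> - 1) * (exp c * (1 + 1 / \<sigma>) ^ a)"
  proof (rule infsum_le_finite_sums[OF summable])
    fix F assume F: "finite F" "F \<subseteq> ?T"
    then have "(\<Sum>D\<in>F. norm (\<Prod>p\<in>D. h p / p))
        \<le> x powr (\<sigma> - 1) * (\<Sum>D\<in>F. \<Prod>p\<in>D. \<bar>h p\<bar> * real p powr (-\<sigma>))"
      using term_le by (auto simp: sum_distrib_left intro: sum_mono)
    also have "\<dots> \<le> x powr (\<sigma> - 1) * (exp c * (1 + 1 / \<sigma>) ^ a)"
      using F assms(3) by (intro mult_left_mono rankin_bound_abs_h) auto
    finally show "(\<Sum>D\<in>F. norm (\<Prod>p\<in>D. h p / p)) \<le> x powr (\<sigma> - 1) * (exp c * (1 + 1 / \<sigma>) ^ a)" .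
  qed
  finally show ?thesis .
qed

lemma mean_value_split:
  "mean_value = (\<Sum>D\<in>{D \<in> prime_sets. \<Prod>D \<le> N}. (\<Prod>p\<in>D. h p) / real (\<Prod>D))
    + infsum (\<lambda>D. \<Prod>p\<in>D. h p / p) {D \<in> prime_sets. N < \<Prod>D}"
proof -
  let ?t = "\<lambda>D. \<Prod>p\<in>D. h p / p"
  let ?H = "{D \<in> prime_sets. \<Prod>D \<le> N}" and ?T = "{D \<in> prime_sets. N < \<Prod>D}"
  have "prime_sets = ?H \<union> ?T" by auto
  then have "mean_value = infsum ?t ?H + infsum ?t ?T"
    unfolding mean_value_def
    using abs_summable_summable[OF summable_on_subset[OF abs_summable_mean_terms]]
    by (subst \<open>prime_sets = ?H \<union> ?T\<close>, intro infsum_Un_disjoint) auto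
  also have "infsum ?t ?H = (\<Sum>D\<in>?H. (\<Prod>p\<in>D. h p) / real (\<Prod>D))"
    using finite_prime_sets_Prod_le by (simp add: prod_dividef)
  finally show ?thesis .
qed

lemma abs_sum_minus_mean_value_le:
  assumes N: "real N \<le> x" "x < real N + 1" and "x > 0" "0 < \<sigma>" "\<sigma> \<le> 1"
  shows "\<bar>(\<Sum>n\<in>{1..N}. \<Prod>p\<in>prime_factors n. 1 + h p) - mean_value * x\<bar>
    \<le> 2 * x powr \<sigma> * (exp c * (1 + 1 / \<sigma>) ^ a)"
proof -
  let ?t = "\<lambda>D. \<Prod>p\<in>D. h p / p" and ?E = "exp c * (1 + 1 / \<sigma>) ^ a"
  let ?H = "{D \<in> prime_sets. \<Prod>D \<le> N}" and ?T = "{D \<in> prime_sets. N < \<Prod>D}"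
  have "(\<Sum>n\<in>{1..N}. \<Prod>p\<in>prime_factors n. 1 + h p) - mean_value * x
      = (\<Sum>D\<in>?H. (\<Prod>p\<in>D. h p) * (real (N div \<Prod>D) - x / real (\<Prod>D))) - x * infsum ?t ?T"
    unfolding sum_prod_one_plus_prime_factors mean_value_split[of N]
    by (simp add: algebra_simps sum_subtractf sum_distrib_left sum_distrib_right)
  also have "\<bar>\<dots>\<bar> \<le> (\<Sum>D\<in>?H. \<bar>\<Prod>p\<in>D. h p\<bar>) + x * \<bar>infsum ?t ?T\<bar>"
  proof -
    have "\<bar>(\<Prod>p\<in>D. h p) * (real (N div \<Prod>D) - x / real (\<Prod>D))\<bar> \<le> \<bar>\<Prod>p\<in>D. h p\<bar>" if "D \<in> ?H" for D
      using abs_div_minus_divide_le_one[OF Prod_prime_set_pos N, of D] that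
      by (simp add: abs_mult mult_left_le)
    then have "\<bar>\<Sum>D\<in>?H. (\<Prod>p\<in>D. h p) * (real (N div \<Prod>D) - x / real (\<Prod>D))\<bar> \<le> (\<Sum>D\<in>?H. \<bar>\<Prod>p\<in>D. h p\<bar>)"
      by (intro order_trans[OF sum_abs sum_mono])
    moreover have "\<bar>x * infsum ?t ?T\<bar> = x * \<bar>infsum ?t ?T\<bar>" using \<open>x > 0\<close> by (simp add: abs_mult)
    ultimately show ?thesis by linarith
  qed
  also have "\<dots> \<le> x powr \<sigma> * ?E + x * (x powr (\<sigma> - 1) * ?E)"
    using sum_abs_head_le[OF N(1) assms(4)] abs_infsum_tail_le[OF assms(3) N(2) assms(4,5)] assms(3)
    by (intro add_mono mult_left_mono) auto
  also have "x * (x powr (\<sigma> - 1) * ?E) = x powr \<sigma> * ?E"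
    using assms(3) by (simp add: powr_diff)
  finally show ?thesis by (simp add: mult_ac)
qed

lemma mean_value_error_le:
  assumes "x \<ge> 2"
  shows "\<bar>(\<Sum>n\<in>{1..nat \<lfloor>x\<rfloor>}. \<Prod>p\<in>prime_factors n. 1 + h p) - mean_value * x\<bar>
    \<le> 2 * exp 1 * exp c * (2 + ln x) ^ a"
proof -
  \<comment> \<open>Rankin's choice: it keeps x powr \<sigma> bounded while 1 + 1/\<sigma> is only logarithmic.\<close>
  define \<sigma> where "\<sigma> = 1 / (1 + ln x)"
  have ln: "ln x > 0" using assms by simp
  have \<sigma>: "0 < \<sigma>" "\<sigma> \<le> 1" "1 + 1 / \<sigma> = 2 + ln x"
    using ln by (auto simp: \<sigma>_def)
  have "x powr \<sigma> = exp (ln x / (1 + ln x))"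
    using assms by (simp add: powr_def \<sigma>_def)
  also have "\<dots> \<le> exp 1"
    using ln by simp
  finally have x_powr: "x powr \<sigma> \<le> exp 1" .
  have "\<bar>(\<Sum>n\<in>{1..nat \<lfloor>x\<rfloor>}. \<Prod>p\<in>prime_factors n. 1 + h p) - mean_value * x\<bar>
      \<le> 2 * x powr \<sigma> * (exp c * (1 + 1 / \<sigma>) ^ a)"
    using assms \<sigma>(1,2) by (intro abs_sum_minus_mean_value_le) auto
  also have "\<dots> \<le> 2 * exp 1 * (exp c * (2 + ln x) ^ a)"
    unfolding \<sigma>(3) using x_powr ln by (intro mult_right_mono mult_left_mono) auto
  finally show ?thesis by (simp add: mult_ac)
qed

lemma mean_value_asymptotics:
  "\<exists>C. \<forall>x::real. x \<ge> 2 \<longrightarrow>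
     \<bar>(\<Sum>n\<in>{1..nat \<lfloor>x\<rfloor>}. \<Prod>p\<in>prime_factors n. 1 + h p) - mean_value * x\<bar> \<le> C * ln x ^ a"
proof (intro exI allI impI)
  fix x :: real assume x: "x \<ge> 2"
  have "\<bar>(\<Sum>n\<in>{1..nat \<lfloor>x\<rfloor>}. \<Prod>p\<in>prime_factors n. 1 + h p) - mean_value * x\<bar>
      \<le> 2 * exp 1 * exp c * (2 + ln x) ^ a"
    by (rule mean_value_error_le[OF x])
  also have "\<dots> \<le> 2 * exp 1 * exp c * ((1 + 2 / ln 2) * ln x) ^ a"
    using x two_plus_ln_le[OF x] by (intro mult_left_mono power_mono) auto
  also have "\<dots> = (2 * exp 1 * exp c * (1 + 2 / ln 2) ^ a) * ln x ^ a"
    by (simp add: power_mult_distrib)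
  finally show "\<bar>(\<Sum>n\<in>{1..nat \<lfloor>x\<rfloor>}. \<Prod>p\<in>prime_factors n. 1 + h p) - mean_value * x\<bar>
      \<le> (2 * exp 1 * exp c * (1 + 2 / ln 2) ^ a) * ln x ^ a" .
qed

end

definition jq_local :: "(nat \<Rightarrow> int) \<Rightarrow> nat \<Rightarrow> real \<Rightarrow> real" where
  "jq_local e r u = (\<Prod>i\<in>{1..r}. (1 - u ^ i) powi e i)"

lemma lin_approx_jq_local:
  "lin_approx (\<Sum>i\<in>{1..r}. if i = 1 then - of_int (e 1) else 0) (jq_local e r)"
  unfolding jq_local_def
proof (rule lin_approx_prod)
  fix i assume i: "i \<in> {1..r}"
  show "lin_approx (if i = 1 then - of_int (e 1) else 0) (\<lambda>u. (1 - u ^ i) powi e i)"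
  proof (cases "i = 1")
    case True
    then show ?thesis using lin_approx_one_minus_powi[of "e 1"] by simp
  next
    case False
    then show ?thesis
      using i lin_approx_compose_power[OF lin_approx_one_minus_powi, of i "e i"] by simp
  qed
qed simp

lemma jq_local_pos:
  assumes "0 \<le> u" "u < 1"
  shows "jq_local e r u > 0"
proof -
  have "u ^ i < 1" if "i \<ge> 1" for i
    using assms that by (simp add: power_less_one_iff)
  then show ?thesis unfolding jq_local_def by (intro prod_pos) auto
qed

lemma jordan_quot_eq_prod_prime_factors:
  assumes "jq_weight e r = 0" "n \<ge> 1"
  shows "jordan_quot e r n = (\<Prod>p\<in>prime_factors n. jq_local e r (1 / real p))"
proof -
  have "jordan_quot e r n
      = (\<Prod>i\<in>{1..r}. real n powi (int i * e i) * (\<Prod>p\<in>prime_factors n. (1 - 1 / real p ^ i) powi e i))"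
    unfolding jordan_quot_def jordan_totient_def
    by (intro prod.cong refl)
      (simp add: power_int_mult_distrib power_int_power prod_power_int_distrib)
  also have "\<dots> = (\<Prod>i\<in>{1..r}. real n powi (int i * e i))
      * (\<Prod>i\<in>{1..r}. \<Prod>p\<in>prime_factors n. (1 - 1 / real p ^ i) powi e i)"
    by (rule prod.distrib)
  also have "(\<Prod>i\<in>{1..r}. real n powi (int i * e i)) = real n powi jq_weight e r"
    using assms(2) by (simp add: prod_power_int_eq_power_int_sum jq_weight_def)
  also have "(\<Prod>i\<in>{1..r}. \<Prod>p\<in>prime_factors n. (1 - 1 / real p ^ i) powi e i)
      = (\<Prod>p\<in>prime_factors n. jq_local e r (1 / real p))"
    unfolding jq_local_def power_one_over by (rule prod.swap)
  finally show ?thesis using assms(1) by simp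
qed

lemma jq_factor_eq:
  assumes "jq_weight e r = 0"
  shows "jq_factor e r k = (if prime k then 1 + (jq_local e r (1 / real k) - 1) / real k else 1)"
proof (cases "prime k")
  case True
  then have "jordan_quot e r k = jq_local e r (1 / real k)"
    using jordan_quot_eq_prod_prime_factors[OF assms, of k] prime_ge_1_nat[of k]
    by (simp add: prime_prime_factors)
  then show ?thesis by (simp add: jq_factor_def assms)
qed (simp add: jq_factor_def)

lemma jq_near_one_at_primes:
  obtains c where "near_one_at_primes (\<lambda>p. jq_local e r (1 / real p) - 1) (nat \<bar>e 1\<bar>) c"
proof -
  have "\<bar>\<Sum>i\<in>{1..r}. if i = 1 then - of_int (e 1) else 0\<bar> \<le> real (nat \<bar>e 1\<bar>)"
    by (simp add: sum.delta)
  then obtain c :: real where c: "c \<ge> 0"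
    "\<And>u::real. 0 \<le> u \<Longrightarrow> u \<le> 1/2 \<Longrightarrow> \<bar>jq_local e r u - 1\<bar> \<le> real (nat \<bar>e 1\<bar>) * u + c * u\<^sup>2"
    using lin_approx_abs_diff_one_le[OF lin_approx_jq_local[of e r]] by blast
  have "\<bar>jq_local e r (1 / real p) - 1\<bar> \<le> (real (nat \<bar>e 1\<bar>) + c / p) / p" if "prime p" for p
  proof -
    have p: "real p \<ge> 2" using prime_ge_2_nat[OF that] by simp
    then have "\<bar>jq_local e r (1 / real p) - 1\<bar> \<le> real (nat \<bar>e 1\<bar>) * (1 / p) + c * (1 / p)\<^sup>2"
      by (intro c(2)) auto
    also have "\<dots> = (real (nat \<bar>e 1\<bar>) + c / p) / p"
      using p by (simp add: field_simps power2_eq_square)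
    finally show ?thesis .
  qed
  with c(1) have "near_one_at_primes (\<lambda>p. jq_local e r (1 / real p) - 1) (nat \<bar>e 1\<bar>) c"
    by (simp add: near_one_at_primes_def)
  then show thesis by (rule that)
qed

theorem theorem2:
  fixes e :: "nat \<Rightarrow> int" and r :: nat
  assumes "jq_weight e r = 0"
  shows "convergent_prod (jq_factor e r) \<and> jq_sing e r > 0 \<and>
    (\<exists>C. \<forall>x::real. x \<ge> 2 \<longrightarrow>
       \<bar>(\<Sum>n\<in>{1..nat \<lfloor>x\<rfloor>}. jordan_quot e r n) - jq_sing e r * x\<bar>
         \<le> C * ln x ^ nat \<bar>e 1\<bar>)"
proof -
  define h where "h = (\<lambda>p. jq_local e r (1 / real p) - 1)"
  define a where "a = nat \<bar>e 1\<bar>"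
  obtain c where "near_one_at_primes h a c"
    unfolding h_def a_def by (rule jq_near_one_at_primes)
  then interpret near_one_at_primes h a c .
  have factor: "jq_factor e r = euler_factor"
    unfolding euler_factor_def fun_eq_iff by (simp add: jq_factor_eq[OF assms] h_def)
  have "1 + h p / p > 0" if "prime p" for p
    using jq_local_pos[of "1 / real p" e r] prime_ge_2_nat[OF that] by (auto simp: h_def field_simps)
  note euler = euler_product_eq_mean_value[OF this]
  have sing: "jq_sing e r = mean_value"
    by (simp add: jq_sing_def factor euler(2))
  have jordan: "(\<Sum>n\<in>{1..N}. jordan_quot e r n) = (\<Sum>n\<in>{1..N}. \<Prod>p\<in>prime_factors n. 1 + h p)" for N
    by (intro sum.cong refl) (simp add: jordan_quot_eq_prod_prime_factors[OF assms] h_def)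
  obtain C where "\<forall>x::real. x \<ge> 2 \<longrightarrow>
      \<bar>(\<Sum>n\<in>{1..nat \<lfloor>x\<rfloor>}. \<Prod>p\<in>prime_factors n. 1 + h p) - mean_value * x\<bar> \<le> C * ln x ^ a"
    using mean_value_asymptotics by blast
  then show ?thesis
    unfolding factor sing jordan a_def using euler(1,3) by blast
qed

end
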